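(* For any signature $\Sigma$ and any reduced $\Sigma$-forests $f_1,f_2$, one has $r_{A_l(\Sigma)}(E_{f_1})=r_{A_l(\Sigma)}(E_{f_2})$ if and only if $\mathrm{tr}(f_1)=\mathrm{tr}(f_2)$.
   Context: $[P]$ is $1$ if $P$ holds, $0$ otherwise. A signature is a set $\Sigma$ with arity map $|\cdot|:\Sigma\to\mathbb N$. A $\Sigma$-term is the leaf $\bot$ or $s(t_1,\dots,t_n)$ with $s$ of arity $n$, $t_i$ terms; degree = number of internal nodes. A $\Sigma$-forest is a finite word of terms; reduced if no term is $\bot$; $E_f$ denotes the basis element of $\mathbf N(T(\Sigma))$ indexed by a reduced forest $f$. Internal nodes of $f$ are numbered $1,\dots,\deg f$ by left-to-right preorder; $d_f(i)$ is the decoration of $i$. A $\Sigma$-trimmed forest is a word of nonempty planar rooted trees with nodes decorated by elements $s\in\Sigma$ having at most $|s|$ children; $\mathrm{tr}(f)$ is obtained from a forest $f$ by deleting all leaves. $A_l(\Sigma)=\{a^s_\ell:s\in\Sigma,\ell\in\mathbb N\}$; a word $a^{s_1}_{\ell_1}\cdots a^{s_n}_{\ell_n}$ is $A_l(\Sigma)$-compatible with $f$ if $n=\deg f$, $s_i=d_f(i)$ for all $i$, and $\ell_i<\ell_{i'}$ whenever $i'$ is a child of $i$ in $f$. $r_{A_l(\Sigma)}(E_f)$ is the (possibly infinite) formal sum of all words $A_l(\Sigma)$-compatible with $f$, in the space $\mathbb K\langle A_l(\Sigma)\rangle$ of noncommutative polynomials with bounded degree. *)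

theory Defs
  imports Main
begin

text \<open>A signature is a type 's of symbols together with an arity map ar :: 's => nat.
  Sigma-terms: the leaf Bot, or a node decorated by a symbol with a list of subterms.\<close>
datatype 's sterm = Bot | Node 's "'s sterm list"

fun wf_term :: "('s \<Rightarrow> nat) \<Rightarrow> 's sterm \<Rightarrow> bool" where
  "wf_term ar Bot = True"
| "wf_term ar (Node s ts) = (length ts = ar s \<and> (\<forall>t\<in>set ts. wf_term ar t))"

definition sigma_forest :: "('s \<Rightarrow> nat) \<Rightarrow> 's sterm list \<Rightarrow> bool" where
  "sigma_forest ar f = (\<forall>t\<in>set f. wf_term ar t)"

definition reduced :: "'s sterm list \<Rightarrow> bool" where
  "reduced f = (\<forall>t\<in>set f. t \<noteq> Bot)"

text \<open>Internal nodes of a forest in left-to-right preorder (numbered 0,1,... here),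
  each recorded as (decoration, index of its parent if any).\<close>
fun pre_nodes :: "nat option \<Rightarrow> nat \<Rightarrow> 's sterm list \<Rightarrow> ('s \<times> nat option) list" where
  "pre_nodes p n [] = []"
| "pre_nodes p n (Bot # ts) = pre_nodes p n ts"
| "pre_nodes p n (Node s us # ts) =
     (let L = pre_nodes (Some n) (Suc n) us
      in (s, p) # L @ pre_nodes p (Suc n + length L) ts)"

definition nodes :: "'s sterm list \<Rightarrow> ('s \<times> nat option) list" where
  "nodes f = pre_nodes None 0 f"

definition deg :: "'s sterm list \<Rightarrow> nat" where
  "deg f = length (nodes f)"

definition dec :: "'s sterm list \<Rightarrow> nat \<Rightarrow> 's" where
  "dec f i = fst (nodes f ! i)"

definition is_child :: "'s sterm list \<Rightarrow> nat \<Rightarrow> nat \<Rightarrow> bool" where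
  "is_child f i' i = (i' < deg f \<and> snd (nodes f ! i') = Some i)"

text \<open>Letters a^s_l of A_l(Sigma) are pairs (s, l); words are lists of letters.\<close>
type_synonym 's letter = "'s \<times> nat"

definition Al_compatible :: "'s letter list \<Rightarrow> 's sterm list \<Rightarrow> bool" where
  "Al_compatible w f =
     (length w = deg f \<and> (\<forall>i<deg f. fst (w ! i) = dec f i) \<and>
      (\<forall>i i'. i < deg f \<longrightarrow> i' < deg f \<longrightarrow> is_child f i' i \<longrightarrow> snd (w ! i) < snd (w ! i')))"

text \<open>r_{A_l(Sigma)}(E_f): the formal sum of all compatible words, represented as its
  coefficient function on words (a noncommutative series over the field 'k).\<close>
definition r_Al :: "'s sterm list \<Rightarrow> ('s letter list \<Rightarrow> 'k::field)" where
  "r_Al f = (\<lambda>w. if Al_compatible w f then 1 else 0)"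

text \<open>Trimmed forests: planar rooted trees with decorated nodes; tr deletes all leaves.\<close>
datatype 's ttree = TNode 's "'s ttree list"

fun tr_term :: "'s sterm \<Rightarrow> 's ttree list" where
  "tr_term Bot = []"
| "tr_term (Node s ts) = [TNode s (concat (map tr_term ts))]"

definition tr :: "'s sterm list \<Rightarrow> 's ttree list" where
  "tr f = concat (map tr_term f)"

end

theory Submission
  imports Defs
begin

text \<open>The preorder node list of a forest, with each node recorded as (decoration, parent),
  only depends on its trimmed forest and in turn determines it, because in preorder
  the subtree of a node is the maximal block after it whose parents lie inside the block.
  So it suffices to show that such a parent list N is determined by its compatible words.
  The word with labels 0, 1, ... recovers the length and decorations. For the parents,
  lifting the labels of a node i and of all its descendants in N by length N gives a
  compatible word; if it is also compatible with N', then every child of i in N' is a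
  descendant of i in N, whose parent in N is therefore at least i (parents precede
  children). Applied in both directions this forces equal parents.\<close>

fun pre_tnodes :: "nat option \<Rightarrow> nat \<Rightarrow> 's ttree list \<Rightarrow> ('s \<times> nat option) list" where
  "pre_tnodes p n [] = []"
| "pre_tnodes p n (TNode s us # ts) =
     (let L = pre_tnodes (Some n) (Suc n) us
      in (s, p) # L @ pre_tnodes p (Suc n + length L) ts)"

lemma tr_Nil [simp]: "tr [] = []"
  by (simp add: tr_def)

lemma tr_Bot [simp]: "tr (Bot # ts) = tr ts"
  by (simp add: tr_def)

lemma tr_Node [simp]: "tr (Node s us # ts) = TNode s (tr us) # tr ts"
  by (simp add: tr_def)

lemma pre_nodes_eq_pre_tnodes_tr: "pre_nodes p n f = pre_tnodes p n (tr f)"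
  by (induction p n f rule: pre_nodes.induct) (auto simp: Let_def)

lemma pre_tnodes_parent:
  assumes "k < length (pre_tnodes p n xs)"
  shows "snd (pre_tnodes p n xs ! k) = p \<or>
    (\<exists>a. snd (pre_tnodes p n xs ! k) = Some a \<and> n \<le> a \<and> a < n + k)"
  using assms
proof (induction p n xs arbitrary: k rule: pre_tnodes.induct)
  case (1 p n)
  then show ?case by simp
next
  case (2 p n s us ts)
  define A where "A = pre_tnodes (Some n) (Suc n) us"
  define B where "B = pre_tnodes p (Suc n + length A) ts"
  have unfold: "pre_tnodes p n (TNode s us # ts) = (s, p) # A @ B"
    by (simp add: A_def B_def Let_def)
  show ?case
  proof (cases k)
    case 0
    then show ?thesis unfolding unfold by simp
  next
    case (Suc j)
    show ?thesis
    proof (cases "j < length A")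
      case True
      then show ?thesis
        using "2.IH"(1)[of j] Suc unfolding unfold by (auto simp: A_def nth_append)
    next
      case False
      then have "j - length A < length B"
        using "2.prems" Suc unfolding unfold by simp
      then show ?thesis
        using "2.IH"(2)[of A "j - length A"] Suc False unfolding unfold
        by (auto simp: A_def B_def nth_append)
    qed
  qed
qed

lemma pre_tnodes_eq_Nil_iff [simp]: "pre_tnodes p n xs = [] \<longleftrightarrow> xs = []"
  by (cases "(p, n, xs)" rule: pre_tnodes.cases) (auto simp: Let_def)

lemma hd_pre_tnodes_parent: "xs \<noteq> [] \<Longrightarrow> snd (hd (pre_tnodes p n xs)) = p"
  by (cases "(p, n, xs)" rule: pre_tnodes.cases) (auto simp: Let_def)

lemma takeWhile_pre_tnodes_block:
  assumes "\<forall>e\<in>set A. snd e \<noteq> p"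
  shows "takeWhile (\<lambda>e. snd e \<noteq> p) (A @ pre_tnodes p m xs) = A"
  using assms hd_pre_tnodes_parent[of xs p m]
  by (auto simp: takeWhile_append2 takeWhile_eq_Nil_iff)

lemma pre_tnodes_inj:
  assumes "p = None \<or> (\<exists>k. p = Some k \<and> k < n)"
    and "pre_tnodes p n xs = pre_tnodes p n ys"
  shows "xs = ys"
  using assms
proof (induction p n xs arbitrary: ys rule: pre_tnodes.induct)
  case (1 p n)
  then show ?case by (metis pre_tnodes_eq_Nil_iff)
next
  case (2 p n s us ts)
  obtain s' us' ts' where ys: "ys = TNode s' us' # ts'"
    using "2.prems"(2) by (cases ys) (auto simp: Let_def intro: ttree.exhaust)
  define A where "A = pre_tnodes (Some n) (Suc n) us"
  define A' where "A' = pre_tnodes (Some n) (Suc n) us'"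
  have block_parents: "\<forall>e\<in>set (pre_tnodes (Some n) (Suc n) zs). snd e \<noteq> p" for zs
    using pre_tnodes_parent[of _ "Some n" "Suc n" zs] "2.prems"(1)
    by (fastforce simp: in_set_conv_nth)
  have eq: "s = s'"
    "A @ pre_tnodes p (Suc n + length A) ts = A' @ pre_tnodes p (Suc n + length A') ts'"
    using "2.prems"(2) by (simp_all add: ys A_def A'_def Let_def)
  have "A = takeWhile (\<lambda>e. snd e \<noteq> p) (A @ pre_tnodes p (Suc n + length A) ts)"
    by (rule takeWhile_pre_tnodes_block[symmetric]) (simp add: A_def block_parents)
  also have "\<dots> = takeWhile (\<lambda>e. snd e \<noteq> p) (A' @ pre_tnodes p (Suc n + length A') ts')"
    by (simp only: eq(2))
  also have "\<dots> = A'"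
    by (rule takeWhile_pre_tnodes_block) (simp add: A'_def block_parents)
  finally have "A = A'" .
  then have "us = us'" "ts = ts'"
    using "2.IH"(1)[of us'] "2.IH"(2)[of A ts'] "2.prems"(1) eq(2)
    by (auto simp: A_def A'_def)
  then show ?case
    using ys eq(1) by simp
qed

lemma nodes_eq_iff_tr_eq: "nodes f1 = nodes f2 \<longleftrightarrow> tr f1 = tr f2"
  using pre_tnodes_inj[of None 0] by (auto simp: nodes_def pre_nodes_eq_pre_tnodes_tr)

definition compatible :: "('s \<times> nat option) list \<Rightarrow> 's letter list \<Rightarrow> bool" where
  "compatible N w \<longleftrightarrow> length w = length N \<and> (\<forall>i<length N. fst (w ! i) = fst (N ! i)) \<and>
     (\<forall>i i'. i < length N \<longrightarrow> i' < length N \<longrightarrow> snd (N ! i') = Some i \<longrightarrow>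
        snd (w ! i) < snd (w ! i'))"

lemma Al_compatible_iff_compatible: "Al_compatible w f \<longleftrightarrow> compatible (nodes f) w"
  unfolding Al_compatible_def compatible_def deg_def dec_def is_child_def by auto

lemma r_Al_eq_iff_compatible_eq:
  "(r_Al f1 :: 's letter list \<Rightarrow> 'k::field) = r_Al f2 \<longleftrightarrow>
     (\<forall>w. compatible (nodes f1) w \<longleftrightarrow> compatible (nodes f2) w)"
  unfolding r_Al_def Al_compatible_iff_compatible fun_eq_iff by auto

definition parents_precede :: "('s \<times> nat option) list \<Rightarrow> bool" where
  "parents_precede N \<longleftrightarrow> (\<forall>k<length N. \<forall>a. snd (N ! k) = Some a \<longrightarrow> a < k)"

lemma parents_precede_nodes: "parents_precede (nodes f)"
  using pre_tnodes_parent[of _ None 0]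
  by (fastforce simp: parents_precede_def nodes_def pre_nodes_eq_pre_tnodes_tr)

inductive ancestor :: "('s \<times> nat option) list \<Rightarrow> nat \<Rightarrow> nat \<Rightarrow> bool" for N where
  parent: "b < length N \<Longrightarrow> snd (N ! b) = Some a \<Longrightarrow> ancestor N a b"
| step: "b < length N \<Longrightarrow> snd (N ! b) = Some c \<Longrightarrow> ancestor N a c \<Longrightarrow> ancestor N a b"

lemma ancestor_imp_parent_ge:
  "ancestor N a b \<Longrightarrow> parents_precede N \<Longrightarrow> a < b \<and> (\<exists>c. snd (N ! b) = Some c \<and> a \<le> c)"
  by (induction rule: ancestor.induct) (fastforce simp: parents_precede_def)+

definition subtree_lifted_word :: "('s \<times> nat option) list \<Rightarrow> nat \<Rightarrow> 's letter list" where
  "subtree_lifted_word N i =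
     map (\<lambda>k. (fst (N ! k), k + (if k = i \<or> ancestor N i k then length N else 0))) [0..<length N]"

lemma compatible_index_word:
  "parents_precede N \<Longrightarrow> compatible N (map (\<lambda>k. (fst (N ! k), k)) [0..<length N])"
  unfolding compatible_def parents_precede_def by auto

lemma length_subtree_lifted_word [simp]: "length (subtree_lifted_word N i) = length N"
  by (simp add: subtree_lifted_word_def)

lemma nth_subtree_lifted_word [simp]:
  "k < length N \<Longrightarrow> subtree_lifted_word N i ! k =
     (fst (N ! k), k + (if k = i \<or> ancestor N i k then length N else 0))"
  by (simp add: subtree_lifted_word_def)

lemma compatible_subtree_lifted_word:
  assumes "parents_precede N"
  shows "compatible N (subtree_lifted_word N i)"
  unfolding compatible_def
proof (intro conjI allI impI)
  fix a b
  assume b: "b < length N" and parent: "snd (N ! b) = Some a" and "a < length N"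
  moreover have "a < b"
    using assms b parent by (auto simp: parents_precede_def)
  moreover have "a = i \<or> ancestor N i a \<Longrightarrow> ancestor N i b"
    using b parent by (auto intro: ancestor.intros)
  ultimately show "snd (subtree_lifted_word N i ! a) < snd (subtree_lifted_word N i ! b)"
    by auto
qed auto

lemma same_compatible_parent_ge:
  assumes "parents_precede N1" "parents_precede N2"
    and same: "\<And>w. compatible N1 w \<longleftrightarrow> compatible N2 w"
    and "length N1 = length N2" "j < length N1" "snd (N1 ! j) = Some i"
  shows "\<exists>c. snd (N2 ! j) = Some c \<and> i \<le> c"
proof -
  have "i < j"
    using assms(1,5,6) by (auto simp: parents_precede_def)
  have "compatible N1 (subtree_lifted_word N2 i)"
    using same compatible_subtree_lifted_word[OF assms(2)] by blast
  then have "snd (subtree_lifted_word N2 i ! i) < snd (subtree_lifted_word N2 i ! j)"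
    using \<open>i < j\<close> assms(5,6) unfolding compatible_def by (meson order.strict_trans)
  then have "ancestor N2 i j"
    using \<open>i < j\<close> assms(4,5) by (auto split: if_splits)
  then show ?thesis
    using ancestor_imp_parent_ge assms(2) by blast
qed

lemma compatible_inj:
  assumes N1: "parents_precede N1" and N2: "parents_precede N2"
    and same: "\<And>w. compatible N1 w \<longleftrightarrow> compatible N2 w"
  shows "N1 = N2"
proof (rule nth_equalityI)
  have index_word: "compatible N2 (map (\<lambda>k. (fst (N1 ! k), k)) [0..<length N1])"
    using same compatible_index_word[OF N1] by blast
  then show len: "length N1 = length N2"
    by (simp add: compatible_def)
  fix k
  assume k: "k < length N1"
  have "fst (N1 ! k) = fst (N2 ! k)"
    using index_word k len by (auto simp: compatible_def)
  moreover have "snd (N1 ! k) = snd (N2 ! k)"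
    using same_compatible_parent_ge[OF N1 N2 same len k]
      same_compatible_parent_ge[OF N2 N1 same[symmetric] len[symmetric]] k len
    by (cases "snd (N1 ! k)"; cases "snd (N2 ! k)") (fastforce+)
  ultimately show "N1 ! k = N2 ! k"
    by (simp add: prod_eq_iff)
qed

theorem lemma5p3:
  fixes ar :: "'s \<Rightarrow> nat" and f1 f2 :: "'s sterm list"
  assumes "sigma_forest ar f1" and "sigma_forest ar f2"
    and "reduced f1" and "reduced f2"
  shows "((r_Al f1 :: 's letter list \<Rightarrow> 'k::field) = r_Al f2) \<longleftrightarrow> tr f1 = tr f2"
proof -
  have "(r_Al f1 :: 's letter list \<Rightarrow> 'k) = r_Al f2 \<longleftrightarrow> nodes f1 = nodes f2"
    using compatible_inj[OF parents_precede_nodes parents_precede_nodes]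
    by (auto simp: r_Al_eq_iff_compatible_eq)
  then show ?thesis
    by (simp add: nodes_eq_iff_tr_eq)
qed

end
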